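(* Let $T:M_d\to M_d$ be a completely positive map with $T(I)\le I$, whose stabilization index $n_T$ is finite. If $T$ is corner-faithful, then $T$ is unital, i.e. $T(I)=I$.
   Context: $M_d$ is the algebra of complex $d\times d$ matrices with the positive semidefinite order. The defect is $d(T)=I-T(I)\ge 0$. The stabilization index is $n_T=\min\{n\ge1: T^n(d(T))=0\}$ (with $T^0=\mathrm{id}$). For a positive semidefinite $x$, $\mathrm{supp}(x)$ denotes the orthogonal projection onto the range of $x$. When $n_T<\infty$, the orbit-support projection is $Q_T=\bigvee_{k<n_T}\mathrm{supp}(T^k(d(T)))$. $T$ is corner-faithful if for every $x\ge0$ with $x\neq0$ and $\mathrm{supp}(x)\le Q_T$ one has $T(x)\ne 0$. *)

theory Defs
  imports Complex_Main "Jordan_Normal_Form.Matrix"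
begin

definition adj :: "complex mat \<Rightarrow> complex mat" where
  "adj A = mat (dim_col A) (dim_row A) (\<lambda>(i,j). cnj (A $$ (j,i)))"

definition psd :: "nat \<Rightarrow> complex mat \<Rightarrow> bool" where
  "psd n A \<longleftrightarrow> A \<in> carrier_mat n n \<and> adj A = A \<and>
     (\<forall>v \<in> carrier_vec n. Im ((A *\<^sub>v v) \<bullet>c v) = 0 \<and> Re ((A *\<^sub>v v) \<bullet>c v) \<ge> 0)"

definition loewner_le :: "nat \<Rightarrow> complex mat \<Rightarrow> complex mat \<Rightarrow> bool" where
  "loewner_le n A B \<longleftrightarrow> A \<in> carrier_mat n n \<and> B \<in> carrier_mat n n \<and> psd n (B - A)"

definition mat_range :: "complex mat \<Rightarrow> complex vec set" where
  "mat_range A = {A *\<^sub>v v | v. v \<in> carrier_vec (dim_col A)}"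

definition proj_onto :: "nat \<Rightarrow> complex vec set \<Rightarrow> complex mat" where
  "proj_onto n S = (THE P. P \<in> carrier_mat n n \<and> P * P = P \<and> adj P = P \<and> mat_range P = S)"

definition supp :: "nat \<Rightarrow> complex mat \<Rightarrow> complex mat" where
  "supp n x = proj_onto n (mat_range x)"

definition linear_map_on :: "nat \<Rightarrow> (complex mat \<Rightarrow> complex mat) \<Rightarrow> bool" where
  "linear_map_on d T \<longleftrightarrow>
     (\<forall>A \<in> carrier_mat d d. T A \<in> carrier_mat d d) \<and>
     (\<forall>A \<in> carrier_mat d d. \<forall>B \<in> carrier_mat d d. T (A + B) = T A + T B) \<and>
     (\<forall>A \<in> carrier_mat d d. \<forall>c. T (c \<cdot>\<^sub>m A) = c \<cdot>\<^sub>m T A)"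

text \<open>The ampliation id_k tensor T acting on M_k(M_d), identified with (k d) x (k d) matrices
  partitioned into d x d blocks.\<close>
definition ampliation :: "nat \<Rightarrow> nat \<Rightarrow> (complex mat \<Rightarrow> complex mat) \<Rightarrow> complex mat \<Rightarrow> complex mat" where
  "ampliation d k T X = mat (k*d) (k*d) (\<lambda>(i,j).
      T (mat d d (\<lambda>(a,b). X $$ ((i div d) * d + a, (j div d) * d + b))) $$ (i mod d, j mod d))"

definition completely_positive :: "nat \<Rightarrow> (complex mat \<Rightarrow> complex mat) \<Rightarrow> bool" where
  "completely_positive d T \<longleftrightarrow> linear_map_on d T \<and>
     (\<forall>k\<ge>1. \<forall>X. psd (k*d) X \<longrightarrow> psd (k*d) (ampliation d k T X))"

definition defect :: "nat \<Rightarrow> (complex mat \<Rightarrow> complex mat) \<Rightarrow> complex mat" where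
  "defect d T = 1\<^sub>m d - T (1\<^sub>m d)"

definition stab_finite :: "nat \<Rightarrow> (complex mat \<Rightarrow> complex mat) \<Rightarrow> bool" where
  "stab_finite d T \<longleftrightarrow> (\<exists>n\<ge>1. (T ^^ n) (defect d T) = 0\<^sub>m d d)"

text \<open>Stabilization index n_T (meaningful when stab_finite holds).\<close>
definition stab_index :: "nat \<Rightarrow> (complex mat \<Rightarrow> complex mat) \<Rightarrow> nat" where
  "stab_index d T = (LEAST n. n \<ge> 1 \<and> (T ^^ n) (defect d T) = 0\<^sub>m d d)"

definition subspace_sum :: "nat \<Rightarrow> nat \<Rightarrow> (nat \<Rightarrow> complex vec set) \<Rightarrow> complex vec set" where
  "subspace_sum d m S = {foldr (+) (map f [0..<m]) (0\<^sub>v d) | f. \<forall>k<m. f k \<in> S k}"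

text \<open>Orbit-support projection Q_T: the join of supp(T^k(d(T))), k < n_T, i.e. the orthogonal
  projection onto the (closed) sum of their ranges.\<close>
definition orbit_support :: "nat \<Rightarrow> (complex mat \<Rightarrow> complex mat) \<Rightarrow> complex mat" where
  "orbit_support d T = proj_onto d (subspace_sum d (stab_index d T)
      (\<lambda>k. mat_range (supp d ((T ^^ k) (defect d T)))))"

definition corner_faithful :: "nat \<Rightarrow> (complex mat \<Rightarrow> complex mat) \<Rightarrow> bool" where
  "corner_faithful d T \<longleftrightarrow> (\<forall>x. psd d x \<and> x \<noteq> 0\<^sub>m d d \<and> loewner_le d (supp d x) (orbit_support d T)
      \<longrightarrow> T x \<noteq> 0\<^sub>m d d)"

end

theory Submission
  imports Defs "HOL-Library.Set_Algebras"
begin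

text \<open>If \<open>T(I) \<noteq> I\<close>, the defect \<open>D = I - T(I)\<close> is a nonzero positive matrix. Writing
  \<open>n\<^sub>T = m + 1\<close>, the last nonzero iterate \<open>x = T\<^sup>m(D)\<close> (nonzero by minimality of \<open>n\<^sub>T\<close>, or
  because \<open>x = D\<close> if \<open>m = 0\<close>) is positive and satisfies \<open>T(x) = T\<^bsup>n\<^sub>T\<^esup>(D) = 0\<close>. Its range lies
  in the sum of the ranges of the \<open>T\<^sup>k(D)\<close>, \<open>k < n\<^sub>T\<close>, so \<open>supp(x) \<le> Q\<^sub>T\<close>, and corner-faithfulness
  gives \<open>T(x) \<noteq> 0\<close>, a contradiction.

  Since \<open>supp\<close> and \<open>Q\<^sub>T\<close> are defined as the unique orthogonal projection onto a given
  subspace, one must also show that these projections exist: ranges of matrices and finite sums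
  of them are obtained from \<open>{0}\<close> by adding one line at a time, and an orthogonal projection
  \<open>P\<close> is extended to the line through \<open>v\<close> by the Gram-Schmidt update \<open>P + u u\<^sup>* / |u|\<^sup>2\<close> with \<open>u = v - P v\<close>.\<close>

declare minus_carrier_mat [simp]

lemma dim_adj [simp]: "dim_row (adj A) = dim_col A" "dim_col (adj A) = dim_row A"
  by (simp_all add: adj_def)

lemma index_adj [simp]: "i < dim_col A \<Longrightarrow> j < dim_row A \<Longrightarrow> adj A $$ (i, j) = cnj (A $$ (j, i))"
  by (simp add: adj_def)

lemma adj_mult:
  assumes "A \<in> carrier_mat n m" "B \<in> carrier_mat m k"
  shows "adj (A * B) = adj B * adj A"
  using assms by (intro eq_matI) (auto simp: scalar_prod_def ac_simps)

lemma adj_minus: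
  assumes "A \<in> carrier_mat n m" "B \<in> carrier_mat n m"
  shows "adj (A - B) = adj A - adj B"
  using assms by (intro eq_matI) auto

lemma cscalar_prod_adj:
  assumes A: "A \<in> carrier_mat n n" and v: "v \<in> carrier_vec n" and w: "w \<in> carrier_vec n"
  shows "(A *\<^sub>v v) \<bullet>c w = v \<bullet>c (adj A *\<^sub>v w)"
proof -
  have "(A *\<^sub>v v) \<bullet>c w = (\<Sum>i<n. \<Sum>j<n. v $ j * (A $$ (i, j) * cnj (w $ i)))"
    using A v w by (simp add: scalar_prod_def lessThan_atLeast0 sum_distrib_left ac_simps)
  also have "\<dots> = (\<Sum>j<n. \<Sum>i<n. v $ j * (A $$ (i, j) * cnj (w $ i)))"
    by (rule sum.swap)
  also have "\<dots> = v \<bullet>c (adj A *\<^sub>v w)"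
    using A v w by (simp add: scalar_prod_def lessThan_atLeast0 sum_distrib_left ac_simps)
  finally show ?thesis .
qed

lemma mult_unit_vec_eq_col:
  fixes A :: "'a :: semiring_1 mat"
  assumes "A \<in> carrier_mat n m" "j < m"
  shows "A *\<^sub>v unit_vec m j = col A j"
  using assms by (intro eq_vecI) (auto simp: scalar_prod_def unit_vec_def if_distrib[of "times _"] cong: if_cong)

lemma eq_mat_if_mult_vec_eq:
  fixes A B :: "'a :: comm_ring_1 mat"
  assumes A: "A \<in> carrier_mat n n" and B: "B \<in> carrier_mat n n"
    and eq: "\<And>v. v \<in> carrier_vec n \<Longrightarrow> A *\<^sub>v v = B *\<^sub>v v"
  shows "A = B"
proof (rule eq_matI)
  fix i j assume "i < dim_row B" "j < dim_col B"
  then show "A $$ (i, j) = B $$ (i, j)"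
    using eq[of "unit_vec n j"] A B
    by (metis carrier_matD index_col mult_unit_vec_eq_col unit_vec_carrier)
qed (use A B in auto)

lemma mat_range_carrier: "A \<in> carrier_mat n m \<Longrightarrow> mat_range A \<subseteq> carrier_vec n"
  unfolding mat_range_def by auto

lemma mult_mat_vec_in_mat_range: "v \<in> carrier_vec (dim_col A) \<Longrightarrow> A *\<^sub>v v \<in> mat_range A"
  unfolding mat_range_def by auto

lemma zero_vec_in_mat_range:
  assumes "A \<in> carrier_mat n m"
  shows "0\<^sub>v n \<in> mat_range A"
proof -
  have "A *\<^sub>v 0\<^sub>v m = 0\<^sub>v n"
    using assms by (intro eq_vecI) (auto simp: scalar_prod_def)
  then show ?thesis
    using assms mult_mat_vec_in_mat_range[of "0\<^sub>v m" A] by simp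
qed

lemma set_plus_zero_vec_right:
  fixes S :: "'a :: monoid_add vec set"
  assumes "S \<subseteq> carrier_vec n"
  shows "S + {0\<^sub>v n} = S"
proof (intro subset_antisym subsetI)
  fix x assume "x \<in> S + {0\<^sub>v n}"
  then show "x \<in> S"
    using assms by (auto elim!: set_plus_elim)
next
  fix x assume x: "x \<in> S"
  then have "x = x + 0\<^sub>v n"
    using assms by auto
  then show "x \<in> S + {0\<^sub>v n}"
    using x by (metis set_plus_intro singletonI)
qed

lemma set_plus_zero_vec_left:
  fixes S :: "'a :: monoid_add vec set"
  assumes "S \<subseteq> carrier_vec n"
  shows "{0\<^sub>v n} + S = S"
proof (intro subset_antisym subsetI)
  fix x assume "x \<in> {0\<^sub>v n} + S"
  then show "x \<in> S"
    using assms by (auto elim!: set_plus_elim)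
next
  fix x assume x: "x \<in> S"
  then have "x = 0\<^sub>v n + x"
    using assms by auto
  then show "x \<in> {0\<^sub>v n} + S"
    using x by (metis set_plus_intro singletonI)
qed

lemma set_plus_assoc_vec:
  fixes S T U :: "'a :: semigroup_add vec set"
  assumes "S \<subseteq> carrier_vec n" "T \<subseteq> carrier_vec n" "U \<subseteq> carrier_vec n"
  shows "S + T + U = S + (T + U)"
proof (intro subset_antisym subsetI)
  fix x assume "x \<in> S + T + U"
  then obtain a b c where "a \<in> S" "b \<in> T" "c \<in> U" "x = a + b + c"
    by (auto elim!: set_plus_elim)
  then show "x \<in> S + (T + U)"
    using assms assoc_add_vec[of a n b c] by (metis set_plus_intro subsetD)
next
  fix x assume "x \<in> S + (T + U)"
  then obtain a b c where "a \<in> S" "b \<in> T" "c \<in> U" "x = a + (b + c)"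
    by (auto elim!: set_plus_elim)
  then show "x \<in> S + T + U"
    using assms assoc_add_vec[of a n b c] by (metis set_plus_intro subsetD)
qed

section \<open>Orthogonal projections\<close>

definition orth_proj :: "nat \<Rightarrow> complex mat \<Rightarrow> bool" where
  "orth_proj n P \<longleftrightarrow> P \<in> carrier_mat n n \<and> P * P = P \<and> adj P = P"

lemma orth_proj_fixes_range:
  assumes P: "orth_proj n P" and w: "w \<in> mat_range P"
  shows "P *\<^sub>v w = w"
proof -
  from w obtain v where v: "v \<in> carrier_vec n" and w_def: "w = P *\<^sub>v v"
    using P unfolding mat_range_def orth_proj_def by auto
  have "P *\<^sub>v w = (P * P) *\<^sub>v v"
    using P v assoc_mult_mat_vec[of P n n P n v] unfolding w_def orth_proj_def by simp
  then show ?thesis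
    using P unfolding w_def orth_proj_def by simp
qed

lemma orth_proj_mult_if_range_subset:
  assumes P: "orth_proj n P" and Q: "orth_proj n Q" and sub: "mat_range P \<subseteq> mat_range Q"
  shows "Q * P = P" and "P * Q = P"
proof -
  have PQ: "P \<in> carrier_mat n n" "Q \<in> carrier_mat n n"
    using P Q by (auto simp: orth_proj_def)
  show QP: "Q * P = P"
  proof (rule eq_mat_if_mult_vec_eq)
    fix v :: "complex vec" assume v: "v \<in> carrier_vec n"
    have "P *\<^sub>v v \<in> mat_range Q"
      using sub PQ v mult_mat_vec_in_mat_range[of v P] by auto
    then show "(Q * P) *\<^sub>v v = P *\<^sub>v v"
      using orth_proj_fixes_range[OF Q] PQ v by auto
  qed (use PQ in auto)
  have "P * Q = adj (Q * P)"
    using adj_mult[of Q n n P n] PQ P Q by (simp add: orth_proj_def)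
  then show "P * Q = P"
    using QP P by (simp add: orth_proj_def)
qed

lemma orth_proj_eqI:
  assumes "orth_proj n P" "orth_proj n Q" "mat_range P = mat_range Q"
  shows "P = Q"
proof -
  have "P = Q * P"
    using orth_proj_mult_if_range_subset(1)[OF assms(1,2)] assms(3) by simp
  also have "\<dots> = Q"
    using orth_proj_mult_if_range_subset(2)[OF assms(2,1)] assms(3) by simp
  finally show ?thesis .
qed

lemma proj_onto_mat_range:
  assumes "orth_proj n P"
  shows "proj_onto n (mat_range P) = P"
  unfolding proj_onto_def
proof (rule the_equality)
  show "P \<in> carrier_mat n n \<and> P * P = P \<and> adj P = P \<and> mat_range P = mat_range P"
    using assms by (simp add: orth_proj_def)
next
  fix Q assume "Q \<in> carrier_mat n n \<and> Q * Q = Q \<and> adj Q = Q \<and> mat_range Q = mat_range P"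
  then show "Q = P"
    using orth_proj_eqI[OF _ assms] by (simp add: orth_proj_def)
qed

lemma psd_if_orth_proj:
  assumes "orth_proj n R"
  shows "psd n R"
  unfolding psd_def
proof (intro conjI ballI)
  fix v :: "complex vec" assume v: "v \<in> carrier_vec n"
  have R: "R \<in> carrier_mat n n" "R * R = R" "adj R = R"
    using assms by (auto simp: orth_proj_def)
  have "(R *\<^sub>v v) \<bullet>c v = (R *\<^sub>v (R *\<^sub>v v)) \<bullet>c v"
    using R v assoc_mult_mat_vec[of R n n R n v] by simp
  also have "\<dots> = (R *\<^sub>v v) \<bullet>c (R *\<^sub>v v)"
    using R v cscalar_prod_adj[of R n "R *\<^sub>v v" v] by simp
  finally have "(R *\<^sub>v v) \<bullet>c v \<ge> 0"
    by (simp add: conjugate_square_ge_0_vec)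
  then show "Im ((R *\<^sub>v v) \<bullet>c v) = 0" "0 \<le> Re ((R *\<^sub>v v) \<bullet>c v)"
    by (auto simp: less_eq_complex_def)
qed (use assms in \<open>auto simp: orth_proj_def\<close>)

lemma loewner_le_if_range_subset:
  assumes P: "orth_proj n P" and Q: "orth_proj n Q" and sub: "mat_range P \<subseteq> mat_range Q"
  shows "loewner_le n P Q"
proof -
  have PQ: "P \<in> carrier_mat n n" "Q \<in> carrier_mat n n" "P * P = P" "Q * Q = Q"
    using P Q by (auto simp: orth_proj_def)
  note mult = orth_proj_mult_if_range_subset[OF P Q sub]
  have "(Q - P) * (Q - P) = Q * (Q - P) - P * (Q - P)"
    using PQ by (intro minus_mult_distrib_mat) auto
  also have "\<dots> = Q * Q - Q * P - (P * Q - P * P)"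
    using PQ by (simp add: mult_minus_distrib_mat[of _ n n])
  also have "\<dots> = Q - P"
    using PQ mult by (intro eq_matI) auto
  finally have "orth_proj n (Q - P)"
    using P Q adj_minus[of Q n n P] by (simp add: orth_proj_def)
  then show ?thesis
    using PQ psd_if_orth_proj by (simp add: loewner_le_def)
qed

section \<open>Existence of orthogonal projections onto ranges\<close>

definition has_orth_proj :: "nat \<Rightarrow> complex vec set \<Rightarrow> bool" where
  "has_orth_proj n S \<longleftrightarrow> (\<exists>P. orth_proj n P \<and> mat_range P = S)"

lemma proj_onto_if_has_orth_proj:
  assumes "has_orth_proj n S"
  shows "orth_proj n (proj_onto n S)" and "mat_range (proj_onto n S) = S"
  using assms proj_onto_mat_range unfolding has_orth_proj_def by auto

lemma has_orth_proj_zero: "has_orth_proj n {0\<^sub>v n}"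
proof -
  have "mat_range (0\<^sub>m n n) = {0\<^sub>v n}"
    unfolding mat_range_def by (auto intro!: exI[of _ "0\<^sub>v n"])
  moreover have "orth_proj n (0\<^sub>m n n)"
    unfolding orth_proj_def by (auto intro!: eq_matI)
  ultimately show ?thesis
    unfolding has_orth_proj_def by blast
qed

definition rank_one_proj :: "complex vec \<Rightarrow> complex mat" where
  "rank_one_proj u = mat (dim_vec u) (dim_vec u) (\<lambda>(i, j). u $ i * cnj (u $ j) / (u \<bullet>c u))"

lemma dim_rank_one_proj [simp]:
  "dim_row (rank_one_proj u) = dim_vec u" "dim_col (rank_one_proj u) = dim_vec u"
  by (simp_all add: rank_one_proj_def)

lemma rank_one_proj_mult_vec:
  assumes "u \<in> carrier_vec n" "x \<in> carrier_vec n"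
  shows "rank_one_proj u *\<^sub>v x = ((x \<bullet>c u) / (u \<bullet>c u)) \<cdot>\<^sub>v u"
  using assms
  by (intro eq_vecI) (auto simp: rank_one_proj_def scalar_prod_def sum_distrib_left sum_divide_distrib ac_simps)

lemma cscalar_prod_orth_proj_kernel:
  assumes P: "orth_proj n P" and u: "u \<in> carrier_vec n" "P *\<^sub>v u = 0\<^sub>v n" and x: "x \<in> carrier_vec n"
  shows "(P *\<^sub>v x) \<bullet>c u = 0"
  using cscalar_prod_adj[of P n x u] P u x by (simp add: orth_proj_def)

context
  fixes n :: nat and P :: "complex mat" and u :: "complex vec"
  assumes P: "orth_proj n P" and u: "u \<in> carrier_vec n" "u \<noteq> 0\<^sub>v n" and Pu: "P *\<^sub>v u = 0\<^sub>v n"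
begin

private lemma P_carrier: "P \<in> carrier_mat n n"
  using P by (simp add: orth_proj_def)

private lemma add_rank_one_proj_mult_vec:
  assumes "x \<in> carrier_vec n"
  shows "(P + rank_one_proj u) *\<^sub>v x = P *\<^sub>v x + ((x \<bullet>c u) / (u \<bullet>c u)) \<cdot>\<^sub>v u"
  using assms u P_carrier rank_one_proj_mult_vec[OF u(1) assms]
  by (subst add_mult_distrib_mat_vec[of _ n n]) (auto simp: rank_one_proj_def)

private lemma add_rank_one_proj_fixes:
  assumes z: "z \<in> carrier_vec n"
  shows "(P + rank_one_proj u) *\<^sub>v (P *\<^sub>v z + t \<cdot>\<^sub>v u) = P *\<^sub>v z + t \<cdot>\<^sub>v u"
proof -
  have Pz: "P *\<^sub>v z \<in> carrier_vec n"
    using P_carrier z by simp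
  have "P *\<^sub>v (P *\<^sub>v z + t \<cdot>\<^sub>v u) = (P * P) *\<^sub>v z + t \<cdot>\<^sub>v (P *\<^sub>v u)"
    using P_carrier z u Pz
    by (simp add: mult_add_distrib_mat_vec[of _ n n] mult_mat_vec[of _ n n])
  also have "\<dots> = P *\<^sub>v z"
    using P Pu P_carrier z by (intro eq_vecI) (auto simp: orth_proj_def)
  finally have "P *\<^sub>v (P *\<^sub>v z + t \<cdot>\<^sub>v u) = P *\<^sub>v z" .
  moreover have "(P *\<^sub>v z + t \<cdot>\<^sub>v u) \<bullet>c u = t * (u \<bullet>c u)"
    using cscalar_prod_orth_proj_kernel[OF P u(1) Pu z] Pz u
    by (simp add: add_scalar_prod_distrib[of _ n])
  ultimately show ?thesis
    using add_rank_one_proj_mult_vec[of "P *\<^sub>v z + t \<cdot>\<^sub>v u"] Pz u by simp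
qed

lemma orth_proj_add_rank_one_proj: "orth_proj n (P + rank_one_proj u)"
proof -
  let ?P' = "P + rank_one_proj u"
  have carrier: "?P' \<in> carrier_mat n n"
    using P_carrier u by (simp add: rank_one_proj_def)
  have "?P' * ?P' = ?P'"
  proof (rule eq_mat_if_mult_vec_eq)
    fix x :: "complex vec" assume x: "x \<in> carrier_vec n"
    then show "(?P' * ?P') *\<^sub>v x = ?P' *\<^sub>v x"
      using carrier add_rank_one_proj_mult_vec add_rank_one_proj_fixes by simp
  qed (use carrier u in auto)
  moreover have "adj ?P' = ?P'"
  proof (rule eq_matI)
    have "u \<bullet>c u \<ge> 0"
      by (rule conjugate_square_ge_0_vec)
    then have "cnj (u \<bullet>c u) = u \<bullet>c u"
      by (auto simp: less_eq_complex_def complex_eq_iff)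
    moreover have "cnj (P $$ (j, i)) = P $$ (i, j)" if "i < n" "j < n" for i j
      using P that index_adj[of i P j] by (auto simp: orth_proj_def)
    ultimately show "adj ?P' $$ (i, j) = ?P' $$ (i, j)" if "i < dim_row ?P'" "j < dim_col ?P'" for i j
      using that carrier u P_carrier by (simp add: rank_one_proj_def)
  qed (use carrier u in auto)
  ultimately show ?thesis
    using carrier by (simp add: orth_proj_def)
qed

lemma mat_range_add_rank_one_proj:
  "mat_range (P + rank_one_proj u) = mat_range P + range (\<lambda>t. t \<cdot>\<^sub>v u)"
proof (intro subset_antisym subsetI)
  fix y assume "y \<in> mat_range (P + rank_one_proj u)"
  then obtain x where x: "x \<in> carrier_vec n" and y: "y = (P + rank_one_proj u) *\<^sub>v x"
    using P_carrier u unfolding mat_range_def by auto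
  then show "y \<in> mat_range P + range (\<lambda>t. t \<cdot>\<^sub>v u)"
    using add_rank_one_proj_mult_vec[OF x] mult_mat_vec_in_mat_range[of x P] P_carrier
    by (auto intro: set_plus_intro)
next
  fix y assume "y \<in> mat_range P + range (\<lambda>t. t \<cdot>\<^sub>v u)"
  then obtain z t where z: "z \<in> carrier_vec n" and y: "y = P *\<^sub>v z + t \<cdot>\<^sub>v u"
    using P_carrier unfolding mat_range_def by (auto elim!: set_plus_elim)
  then have "y = (P + rank_one_proj u) *\<^sub>v y"
    using add_rank_one_proj_fixes by simp
  moreover have "y \<in> carrier_vec (dim_col (P + rank_one_proj u))"
    using y z u P_carrier by simp
  ultimately show "y \<in> mat_range (P + rank_one_proj u)"
    by (metis mult_mat_vec_in_mat_range)
qed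

end

lemma has_orth_proj_carrier: "has_orth_proj n S \<Longrightarrow> S \<subseteq> carrier_vec n"
  unfolding has_orth_proj_def orth_proj_def using mat_range_carrier by blast

lemma mat_range_plus_line_orth_component:
  assumes P: "orth_proj n P" and v: "v \<in> carrier_vec n"
  shows "mat_range P + range (\<lambda>t. t \<cdot>\<^sub>v v) = mat_range P + range (\<lambda>t. t \<cdot>\<^sub>v (v - P *\<^sub>v v))"
proof (intro subset_antisym subsetI)
  have Pc: "P \<in> carrier_mat n n"
    using P by (simp add: orth_proj_def)
  {
    fix y assume "y \<in> mat_range P + range (\<lambda>t. t \<cdot>\<^sub>v v)"
    then obtain z t where z: "z \<in> carrier_vec n" and y: "y = P *\<^sub>v z + t \<cdot>\<^sub>v v"
      using Pc unfolding mat_range_def by (auto elim!: set_plus_elim)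
    have "y = P *\<^sub>v (z + t \<cdot>\<^sub>v v) + t \<cdot>\<^sub>v (v - P *\<^sub>v v)"
      using Pc z v unfolding y
      by (intro eq_vecI) (auto simp: mult_add_distrib_mat_vec[of _ n n] mult_mat_vec[of _ n n] algebra_simps)
    then show "y \<in> mat_range P + range (\<lambda>t. t \<cdot>\<^sub>v (v - P *\<^sub>v v))"
      using z v Pc mult_mat_vec_in_mat_range[of "z + t \<cdot>\<^sub>v v" P] by (auto intro: set_plus_intro)
  next
    fix y assume "y \<in> mat_range P + range (\<lambda>t. t \<cdot>\<^sub>v (v - P *\<^sub>v v))"
    then obtain z t where z: "z \<in> carrier_vec n" and y: "y = P *\<^sub>v z + t \<cdot>\<^sub>v (v - P *\<^sub>v v)"
      using Pc unfolding mat_range_def by (auto elim!: set_plus_elim)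
    have "y = P *\<^sub>v (z - t \<cdot>\<^sub>v v) + t \<cdot>\<^sub>v v"
      using Pc z v unfolding y
      by (intro eq_vecI) (auto simp: mult_minus_distrib_mat_vec[of _ n n] mult_mat_vec[of _ n n] algebra_simps)
    then show "y \<in> mat_range P + range (\<lambda>t. t \<cdot>\<^sub>v v)"
      using z v Pc mult_mat_vec_in_mat_range[of "z - t \<cdot>\<^sub>v v" P] by (auto intro: set_plus_intro)
  }
qed

lemma has_orth_proj_plus_line:
  assumes S: "has_orth_proj n S" and v: "v \<in> carrier_vec n"
  shows "has_orth_proj n (S + range (\<lambda>t. t \<cdot>\<^sub>v v))"
proof -
  obtain P where P: "orth_proj n P" and S_eq: "S = mat_range P"
    using S unfolding has_orth_proj_def by blast
  have Pc: "P \<in> carrier_mat n n" and PP: "P * P = P"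
    using P by (auto simp: orth_proj_def)
  define u where "u = v - P *\<^sub>v v"
  have u: "u \<in> carrier_vec n"
    using v Pc by (simp add: u_def)
  have Pu: "P *\<^sub>v u = 0\<^sub>v n"
    using Pc PP v assoc_mult_mat_vec[of P n n P n v]
    by (simp add: u_def mult_minus_distrib_mat_vec[of _ n n])
  have "has_orth_proj n (mat_range P + range (\<lambda>t. t \<cdot>\<^sub>v u))"
  proof (cases "u = 0\<^sub>v n")
    case True
    then have "t \<cdot>\<^sub>v u = 0\<^sub>v n" for t
      by auto
    then have "range (\<lambda>t. t \<cdot>\<^sub>v u) = {0\<^sub>v n}"
      by auto
    then show ?thesis
      using P set_plus_zero_vec_right[OF mat_range_carrier[OF Pc]]
      unfolding has_orth_proj_def by auto
  next
    case False
    then show ?thesis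
      using orth_proj_add_rank_one_proj[OF P u False Pu] mat_range_add_rank_one_proj[OF P u False Pu]
      unfolding has_orth_proj_def by blast
  qed
  then show ?thesis
    using mat_range_plus_line_orth_component[OF P v] S_eq u_def by simp
qed

text \<open>The bound \<open>j < dim_col A\<close> is essential: entries of a vector beyond its dimension are
  unspecified.\<close>

definition lead_cols_range :: "complex mat \<Rightarrow> nat \<Rightarrow> complex vec set" where
  "lead_cols_range A k = {A *\<^sub>v y | y. y \<in> carrier_vec (dim_col A) \<and> (\<forall>j\<in>{k..<dim_col A}. y $ j = 0)}"

lemma lead_cols_range_carrier: "A \<in> carrier_mat n m \<Longrightarrow> lead_cols_range A k \<subseteq> carrier_vec n"
  unfolding lead_cols_range_def by auto

lemma lead_cols_range_0:
  assumes "A \<in> carrier_mat n m"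
  shows "lead_cols_range A 0 = {0\<^sub>v n}"
proof -
  have "A *\<^sub>v y = 0\<^sub>v n" if "y \<in> carrier_vec m" "\<forall>j<m. y $ j = 0" for y
    using assms that by (intro eq_vecI) (auto simp: scalar_prod_def)
  then show ?thesis
    using assms unfolding lead_cols_range_def by (auto intro!: exI[of _ "0\<^sub>v m"])
qed

lemma lead_cols_range_Suc:
  assumes A: "A \<in> carrier_mat n m" and k: "k < m"
  shows "lead_cols_range A (Suc k) = lead_cols_range A k + range (\<lambda>t. t \<cdot>\<^sub>v col A k)"
proof (intro subset_antisym subsetI)
  fix x assume "x \<in> lead_cols_range A (Suc k)"
  then obtain y where y: "y \<in> carrier_vec m" "\<forall>j\<in>{Suc k..<m}. y $ j = 0" and x: "x = A *\<^sub>v y"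
    using A unfolding lead_cols_range_def by auto
  define y' where "y' = vec m (\<lambda>j. if j = k then 0 else y $ j)"
  have y': "y' \<in> carrier_vec m"
    by (simp add: y'_def)
  have "y = y' + y $ k \<cdot>\<^sub>v unit_vec m k"
    using y by (intro eq_vecI) (auto simp: y'_def unit_vec_def)
  then have "x = A *\<^sub>v (y' + y $ k \<cdot>\<^sub>v unit_vec m k)"
    unfolding x by (rule arg_cong)
  also have "\<dots> = A *\<^sub>v y' + y $ k \<cdot>\<^sub>v col A k"
    using A k y'
    by (simp add: mult_add_distrib_mat_vec[of _ n m] mult_mat_vec[of _ n m] mult_unit_vec_eq_col)
  finally have "x = A *\<^sub>v y' + y $ k \<cdot>\<^sub>v col A k" .
  moreover have "A *\<^sub>v y' \<in> lead_cols_range A k"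
    using A y unfolding lead_cols_range_def y'_def by auto
  ultimately show "x \<in> lead_cols_range A k + range (\<lambda>t. t \<cdot>\<^sub>v col A k)"
    by (auto intro: set_plus_intro)
next
  fix x assume "x \<in> lead_cols_range A k + range (\<lambda>t. t \<cdot>\<^sub>v col A k)"
  then obtain y t where y: "y \<in> carrier_vec m" "\<forall>j\<in>{k..<m}. y $ j = 0" and x: "x = A *\<^sub>v y + t \<cdot>\<^sub>v col A k"
    using A unfolding lead_cols_range_def by (auto elim!: set_plus_elim)
  have "x = A *\<^sub>v (y + t \<cdot>\<^sub>v unit_vec m k)"
    using A k y unfolding x
    by (simp add: mult_add_distrib_mat_vec[of _ n m] mult_mat_vec[of _ n m] mult_unit_vec_eq_col)
  moreover have "\<forall>j\<in>{Suc k..<m}. (y + t \<cdot>\<^sub>v unit_vec m k) $ j = 0"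
    using y by auto
  ultimately show "x \<in> lead_cols_range A (Suc k)"
    using A y unfolding lead_cols_range_def by fastforce
qed

lemma lead_cols_range_dim_col: "lead_cols_range A (dim_col A) = mat_range A"
  unfolding lead_cols_range_def mat_range_def by auto

lemma has_orth_proj_plus_mat_range:
  assumes S: "has_orth_proj n S" and A: "A \<in> carrier_mat n m"
  shows "has_orth_proj n (S + mat_range A)"
proof -
  have "has_orth_proj n (S + lead_cols_range A k)" if "k \<le> m" for k
    using that
  proof (induction k)
    case 0
    then show ?case
      using S lead_cols_range_0[OF A] set_plus_zero_vec_right has_orth_proj_carrier by metis
  next
    case (Suc k)
    have col: "col A k \<in> carrier_vec n"
      using A Suc.prems by auto
    have "S + lead_cols_range A (Suc k) = S + (lead_cols_range A k + range (\<lambda>t. t \<cdot>\<^sub>v col A k))"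
      using lead_cols_range_Suc[OF A] Suc.prems by simp
    also have "\<dots> = S + lead_cols_range A k + range (\<lambda>t. t \<cdot>\<^sub>v col A k)"
      using has_orth_proj_carrier[OF S] lead_cols_range_carrier[OF A] col
      by (intro set_plus_assoc_vec[symmetric]) auto
    finally show ?case
      using has_orth_proj_plus_line[OF _ col] Suc by simp
  qed
  from this[of m] show ?thesis
    using A lead_cols_range_dim_col[of A] by simp
qed

lemma foldr_plus_vec_init:
  fixes xs :: "'a :: monoid_add vec list"
  assumes "set xs \<subseteq> carrier_vec d" "b \<in> carrier_vec d"
  shows "foldr (+) xs b = foldr (+) xs (0\<^sub>v d) + b"
  using assms
proof (induction xs)
  case (Cons x xs)
  have "foldr (+) xs (0\<^sub>v d) \<in> carrier_vec d"
    using Cons.prems(1) by (induction xs) auto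
  then show ?case
    using Cons by (simp add: assoc_add_vec[of x d])
qed simp

lemma foldr_plus_upt_Suc:
  fixes f :: "nat \<Rightarrow> 'a :: monoid_add vec"
  assumes "\<And>k. k \<le> m \<Longrightarrow> f k \<in> carrier_vec d"
  shows "foldr (+) (map f [0..<Suc m]) (0\<^sub>v d) = foldr (+) (map f [0..<m]) (0\<^sub>v d) + f m"
proof -
  have "set (map f [0..<m]) \<subseteq> carrier_vec d"
    using assms by auto
  then show ?thesis
    using assms foldr_plus_vec_init[of "map f [0..<m]" d "f m"] by simp
qed

lemma subspace_sum_0: "subspace_sum d 0 S = {0\<^sub>v d}"
  unfolding subspace_sum_def by auto

lemma subspace_sum_Suc:
  assumes S: "\<And>k. S k \<subseteq> carrier_vec d"
  shows "subspace_sum d (Suc m) S = subspace_sum d m S + S m"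
proof (intro subset_antisym subsetI)
  fix x assume "x \<in> subspace_sum d (Suc m) S"
  then obtain f where f: "\<forall>k<Suc m. f k \<in> S k" and x: "x = foldr (+) (map f [0..<Suc m]) (0\<^sub>v d)"
    unfolding subspace_sum_def by blast
  have "x = foldr (+) (map f [0..<m]) (0\<^sub>v d) + f m"
    unfolding x using S f by (intro foldr_plus_upt_Suc) (meson le_imp_less_Suc subsetD)
  moreover have "foldr (+) (map f [0..<m]) (0\<^sub>v d) \<in> subspace_sum d m S"
    unfolding subspace_sum_def using f by auto
  ultimately show "x \<in> subspace_sum d m S + S m"
    using f by (auto intro: set_plus_intro)
next
  fix x assume "x \<in> subspace_sum d m S + S m"
  then obtain g w where g: "\<forall>k<m. g k \<in> S k" and w: "w \<in> S m"
    and x: "x = foldr (+) (map g [0..<m]) (0\<^sub>v d) + w"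
    unfolding subspace_sum_def by (auto elim!: set_plus_elim)
  define f where "f = g(m := w)"
  have f: "\<forall>k<Suc m. f k \<in> S k"
    using g w by (auto simp: f_def less_Suc_eq)
  have f_carrier: "\<And>k. k \<le> m \<Longrightarrow> f k \<in> carrier_vec d"
    using S f by (meson le_imp_less_Suc subsetD)
  have fg: "map f [0..<m] = map g [0..<m]" and fm: "f m = w"
    by (auto simp: f_def)
  have "x = foldr (+) (map f [0..<m]) (0\<^sub>v d) + f m"
    unfolding x fg fm ..
  also have "\<dots> = foldr (+) (map f [0..<Suc m]) (0\<^sub>v d)"
    using f_carrier by (rule foldr_plus_upt_Suc[symmetric])
  finally show "x \<in> subspace_sum d (Suc m) S"
    unfolding subspace_sum_def using f by blast
qed

lemma subspace_sum_mat_range_Suc: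
  assumes "\<And>k. A k \<in> carrier_mat d n"
  shows "subspace_sum d (Suc m) (\<lambda>k. mat_range (A k))
    = subspace_sum d m (\<lambda>k. mat_range (A k)) + mat_range (A m)"
  using assms mat_range_carrier by (intro subspace_sum_Suc) blast

lemma has_orth_proj_subspace_sum:
  assumes "\<And>k. A k \<in> carrier_mat d d"
  shows "has_orth_proj d (subspace_sum d m (\<lambda>k. mat_range (A k)))"
proof (induction m)
  case 0
  then show ?case
    by (simp add: subspace_sum_0 has_orth_proj_zero)
next
  case (Suc m)
  then show ?case
    using has_orth_proj_plus_mat_range[OF Suc assms] subspace_sum_mat_range_Suc[of A, OF assms]
    by simp
qed

lemma zero_vec_in_has_orth_proj: "has_orth_proj n S \<Longrightarrow> 0\<^sub>v n \<in> S"
  unfolding has_orth_proj_def orth_proj_def using zero_vec_in_mat_range by blast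

lemma mat_range_subset_subspace_sum:
  assumes A: "\<And>k. A k \<in> carrier_mat d d" and "j < m"
  shows "mat_range (A j) \<subseteq> subspace_sum d m (\<lambda>k. mat_range (A k))"
  using \<open>j < m\<close>
proof (induction m)
  case (Suc m)
  let ?S = "subspace_sum d m (\<lambda>k. mat_range (A k))"
  have S: "?S \<subseteq> carrier_vec d"
    using has_orth_proj_carrier[OF has_orth_proj_subspace_sum[of A, OF A]] .
  have "?S = ?S + {0\<^sub>v d}"
    using set_plus_zero_vec_right[OF S] by simp
  also have "\<dots> \<subseteq> ?S + mat_range (A m)"
    using zero_vec_in_mat_range[OF A] by (intro set_plus_mono2) auto
  finally have left: "?S \<subseteq> ?S + mat_range (A m)" .
  have "mat_range (A m) = {0\<^sub>v d} + mat_range (A m)"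
    using set_plus_zero_vec_left[OF mat_range_carrier[OF A]] by simp
  also have "\<dots> \<subseteq> ?S + mat_range (A m)"
    using zero_vec_in_has_orth_proj[OF has_orth_proj_subspace_sum[of A, OF A]]
    by (intro set_plus_mono2) auto
  finally have right: "mat_range (A m) \<subseteq> ?S + mat_range (A m)" .
  show ?case
    using Suc left right subspace_sum_mat_range_Suc[of A, OF A] by (auto simp: less_Suc_eq)
qed simp

lemma supp_orth_proj:
  assumes "A \<in> carrier_mat n m"
  shows "orth_proj n (supp n A)" and "mat_range (supp n A) = mat_range A"
proof -
  have "has_orth_proj n (mat_range A)"
    using has_orth_proj_plus_mat_range[OF has_orth_proj_zero assms]
      set_plus_zero_vec_left[OF mat_range_carrier[OF assms]] by simp
  then show "orth_proj n (supp n A)" and "mat_range (supp n A) = mat_range A"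
    unfolding supp_def by (simp_all add: proj_onto_if_has_orth_proj)
qed

lemma loewner_le_supp_proj_onto:
  assumes "A \<in> carrier_mat n m" "has_orth_proj n S" "mat_range A \<subseteq> S"
  shows "loewner_le n (supp n A) (proj_onto n S)"
  using assms supp_orth_proj proj_onto_if_has_orth_proj by (simp add: loewner_le_if_range_subset)

section \<open>Positive maps and the stabilization index\<close>

lemma psd_if_completely_positive:
  assumes cp: "completely_positive d T" and X: "psd d X"
  shows "psd d (T X)"
proof -
  have X_carrier: "X \<in> carrier_mat d d"
    using X by (simp add: psd_def)
  then have "T X \<in> carrier_mat d d"
    using cp by (simp add: completely_positive_def linear_map_on_def)
  moreover have "mat d d (\<lambda>(a, b). X $$ (a, b)) = X"
    using X_carrier by (intro eq_matI) auto
  ultimately have "ampliation d 1 T X = T X"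
    unfolding ampliation_def by (intro eq_matI) auto
  moreover have "psd (1 * d) (ampliation d 1 T X)"
    using cp X unfolding completely_positive_def by (metis mult_1 order_refl)
  ultimately show ?thesis
    by simp
qed

lemma funpow_carrier_mat:
  "linear_map_on d T \<Longrightarrow> A \<in> carrier_mat d d \<Longrightarrow> (T ^^ k) A \<in> carrier_mat d d"
  by (induction k) (auto simp: linear_map_on_def)

lemma supp_funpow_defect_le_orbit_support:
  assumes "linear_map_on d T" "k < stab_index d T"
  shows "loewner_le d (supp d ((T ^^ k) (defect d T))) (orbit_support d T)"
proof -
  let ?x = "\<lambda>k. (T ^^ k) (defect d T)"
  have x: "?x k \<in> carrier_mat d d" for k
    using assms(1) funpow_carrier_mat by (simp add: defect_def linear_map_on_def)
  have supp: "supp d (?x k) \<in> carrier_mat d d" for k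
    using supp_orth_proj[OF x] by (simp add: orth_proj_def)
  show ?thesis
    unfolding orbit_support_def
    using loewner_le_supp_proj_onto[OF x has_orth_proj_subspace_sum[of "\<lambda>k. supp d (?x k)", OF supp]]
      mat_range_subset_subspace_sum[of "\<lambda>k. supp d (?x k)", OF supp assms(2)] supp_orth_proj(2)[OF x]
    by simp
qed

lemma defect_eq_0_iff:
  assumes "T (1\<^sub>m d) \<in> carrier_mat d d"
  shows "defect d T = 0\<^sub>m d d \<longleftrightarrow> T (1\<^sub>m d) = 1\<^sub>m d"
proof
  assume defect: "defect d T = 0\<^sub>m d d"
  show "T (1\<^sub>m d) = 1\<^sub>m d"
  proof (rule eq_matI)
    fix i j assume "i < dim_row (1\<^sub>m d)" "j < dim_col (1\<^sub>m d)"
    then show "T (1\<^sub>m d) $$ (i, j) = 1\<^sub>m d $$ (i, j)"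
      using arg_cong[OF defect, of "\<lambda>A. A $$ (i, j)"] assms by (simp add: defect_def)
  qed (use assms in auto)
qed (use assms in \<open>auto simp: defect_def\<close>)

lemma funpow_last_before_Least:
  assumes "\<exists>n\<ge>1. (f ^^ n) x = z" "x \<noteq> z"
  obtains m where "Suc m = (LEAST n. n \<ge> 1 \<and> (f ^^ n) x = z)"
    and "(f ^^ m) x \<noteq> z" and "f ((f ^^ m) x) = z"
proof -
  let ?N = "LEAST n. n \<ge> 1 \<and> (f ^^ n) x = z"
  define m where "m = ?N - 1"
  have N: "?N \<ge> 1" "(f ^^ ?N) x = z"
    using LeastI_ex[OF assms(1)] by auto
  then have m: "Suc m = ?N"
    by (simp add: m_def)
  have "(f ^^ m) x \<noteq> z"
  proof (cases m)
    case (Suc _)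
    then show ?thesis
      using not_less_Least[of m "\<lambda>n. n \<ge> 1 \<and> (f ^^ n) x = z"] m by auto
  qed (use assms(2) in simp)
  moreover have "f ((f ^^ m) x) = z"
    using N(2) unfolding m[symmetric] by simp
  ultimately show ?thesis
    using m that by blast
qed

lemma psd_funpow:
  "completely_positive d T \<Longrightarrow> psd d A \<Longrightarrow> psd d ((T ^^ k) A)"
  by (induction k) (simp_all add: psd_if_completely_positive)

theorem theorem4p16:
  fixes d :: nat and T :: "complex mat \<Rightarrow> complex mat"
  assumes "completely_positive d T"
    and "loewner_le d (T (1\<^sub>m d)) (1\<^sub>m d)"
    and "stab_finite d T"
    and "corner_faithful d T"
  shows "T (1\<^sub>m d) = 1\<^sub>m d"
proof (rule ccontr)
  assume not_unital: "T (1\<^sub>m d) \<noteq> 1\<^sub>m d"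
  have lin: "linear_map_on d T"
    using assms(1) by (simp add: completely_positive_def)
  have "defect d T \<noteq> 0\<^sub>m d d"
    using lin not_unital defect_eq_0_iff by (simp add: linear_map_on_def)
  with assms(3) obtain m where m: "Suc m = stab_index d T"
    and nonzero: "(T ^^ m) (defect d T) \<noteq> 0\<^sub>m d d"
    and killed: "T ((T ^^ m) (defect d T)) = 0\<^sub>m d d"
    unfolding stab_finite_def stab_index_def by (rule funpow_last_before_Least)
  have "psd d ((T ^^ m) (defect d T))"
    using assms(1,2) psd_funpow by (simp add: defect_def loewner_le_def)
  moreover have "loewner_le d (supp d ((T ^^ m) (defect d T))) (orbit_support d T)"
    using supp_funpow_defect_le_orbit_support[OF lin] m by simp
  ultimately show False
    using assms(4) nonzero killed unfolding corner_faithful_def by blast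
qed

end
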